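(* Let $I\subset[0,\infty)$ be an interval, let $a,b\in I^\circ$ with $a<b$, and let $f:I\to\mathbb{R}$ be twice differentiable on $I^\circ$ with $f''\in L^1([a,b])$. Assume $|f''|$ is $h$-convex on $[a,b]$. Then $$\left|\frac{1}{b-a}\int_a^b f(x)\,dx-f\Big(\frac{a+b}{2}\Big)\right|\le (b-a)^2\,\frac{|f''(a)|+|f''(b)|}{2}\int_0^1 m(t)h(t)\,dt,$$ where $m(t)=t^2$ for $t\in[0,\frac12)$ and $m(t)=(1-t)^2$ for $t\in[\frac12,1]$.
   Context: Let $J$ be an interval with $(0,1)\subseteq J$ and $h:J\to\mathbb{R}$ a non-negative function, not identically zero, which is Lebesgue integrable on $(0,1)$. A non-negative function $g$ defined on an interval $K$ is called $h$-convex on $K$ if for all $x,y\in K$ and all $t\in(0,1)$: $g(tx+(1-t)y)\le h(t)g(x)+h(1-t)g(y)$. $I^\circ$ denotes the interior of $I$. *)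

theory Defs
  imports "HOL-Analysis.Analysis"
begin

definition h_convex :: "(real \<Rightarrow> real) \<Rightarrow> real set \<Rightarrow> (real \<Rightarrow> real) \<Rightarrow> bool" where
  "h_convex h K g \<longleftrightarrow> is_interval K \<and> (\<forall>x\<in>K. 0 \<le> g x) \<and>
     (\<forall>x\<in>K. \<forall>y\<in>K. \<forall>t\<in>{0<..<1}. g (t * x + (1 - t) * y) \<le> h t * g x + h (1 - t) * g y)"

definition mkernel :: "real \<Rightarrow> real" where
  "mkernel t = (if t < 1/2 then t^2 else (1 - t)^2)"

end

theory Submission
  imports Defs
begin

text \<open>Integrating by parts twice against the Peano kernel
  \<open>K(x) = (b - a)\<^sup>2/2 \<cdot> m((x - a)/(b - a))\<close>, which equals \<open>(x - a)\<^sup>2/2\<close> on the left half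
  of \<open>[a, b]\<close> and \<open>(b - x)\<^sup>2/2\<close> on the right half, gives
  \<open>\<integral>\<^sub>a\<^sup>b K f'' = \<integral>\<^sub>a\<^sup>b f - (b - a) f((a + b)/2)\<close>.
  Writing \<open>x = t b + (1 - t) a\<close> with \<open>t = (x - a)/(b - a)\<close>, h-convexity bounds
  \<open>|f''(x)|\<close> by \<open>h(t) |f''(b)| + h(1 - t) |f''(a)|\<close>; after the substitution \<open>x \<mapsto> t\<close>
  and the symmetry \<open>m(1 - t) = m(t)\<close> both terms integrate to multiples of \<open>\<integral>\<^sub>0\<^sup>1 m h\<close>.\<close>

lemma mkernel_eq_left:
  assumes "t \<le> 1/2"
  shows "mkernel t = t\<^sup>2"
proof (cases "t < 1/2")
  case False
  with assms have "t = 1/2"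
    by simp
  then show ?thesis
    unfolding mkernel_def \<open>t = 1/2\<close> by (simp add: power2_eq_square)
qed (simp add: mkernel_def)

lemma mkernel_eq_right: "1/2 \<le> t \<Longrightarrow> mkernel t = (1 - t)\<^sup>2"
  unfolding mkernel_def by (auto simp: power2_eq_square)

lemma mkernel_one_minus: "mkernel (1 - t) = mkernel t"
  by (cases "t \<le> 1/2") (auto simp: mkernel_eq_left mkernel_eq_right)

lemma mkernel_nonneg: "0 \<le> mkernel t"
  unfolding mkernel_def by auto

lemma mkernel_le_one: "t \<in> {0..1} \<Longrightarrow> mkernel t \<le> 1"
  unfolding mkernel_def by (auto simp: power_le_one)

lemma borel_measurable_mkernel [measurable]: "mkernel \<in> borel_measurable borel"
  unfolding mkernel_def by measurable

lemma set_integrable_mkernel_mult: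
  assumes "set_integrable lborel {0<..<1} h"
  shows "set_integrable lborel {0<..<1} (\<lambda>t. mkernel t * h t)"
  unfolding set_integrable_def
proof (rule Bochner_Integration.integrable_bound)
  show "integrable lborel (\<lambda>t. indicator {0<..<1} t *\<^sub>R h t)"
    using assms unfolding set_integrable_def .
  then show "(\<lambda>t. indicator {0<..<1} t *\<^sub>R (mkernel t * h t)) \<in> borel_measurable lborel"
    by (simp add: mult.left_commute[of _ "mkernel _"])
  show "AE t in lborel. norm (indicator {0<..<1} t *\<^sub>R (mkernel t * h t))
                        \<le> norm (indicator {0<..<1} t *\<^sub>R h t)"
    by (intro AE_I2) (auto simp: indicator_def abs_mult mkernel_nonneg mkernel_le_one
                           intro: mult_left_le_one_le)
qed

lemma has_integral_rescale_unit_interval: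
  fixes g :: "real \<Rightarrow> real"
  assumes "(g has_integral I) {0..1}" and "a < b"
  shows "((\<lambda>x. g ((x - a) / (b - a))) has_integral (b - a) * I) {a..b}"
proof -
  have "((\<lambda>x. g ((1 / (b - a)) * x + - a / (b - a))) has_integral (1 / \<bar>1 / (b - a)\<bar>) * I)
          ((\<lambda>x. (1 / (1 / (b - a))) * x + - ((1 / (1 / (b - a))) * (- a / (b - a)))) ` {0..1})"
    using has_integral_affinity[of g I 0 1 "1 / (b - a)" "- a / (b - a)"] assms
    by (simp add: cbox_interval)
  also have "(\<lambda>x. (1 / (1 / (b - a))) * x + - ((1 / (1 / (b - a))) * (- a / (b - a)))) ` {0..1}
               = {a..b}"
    using \<open>a < b\<close> by (simp add: image_affinity_atLeastAtMost)
  finally show ?thesis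
    using \<open>a < b\<close> by (simp add: diff_divide_distrib)
qed

lemma has_integral_reflect_unit_interval:
  fixes g :: "real \<Rightarrow> real"
  assumes "(g has_integral I) {0..1}"
  shows "((\<lambda>t. g (1 - t)) has_integral I) {0..1}"
  using has_integral_affinity[of g I 0 1 "-1" 1] assms
  by (simp add: cbox_interval image_affinity_atLeastAtMost)

lemma has_integral_rescale_reflect_unit_interval:
  fixes g :: "real \<Rightarrow> real"
  assumes "(g has_integral I) {0..1}" and "a < b"
  shows "((\<lambda>x. g ((b - x) / (b - a))) has_integral (b - a) * I) {a..b}"
proof -
  have "1 - (x - a) / (b - a) = (b - x) / (b - a)" for x
    using \<open>a < b\<close> by (simp add: field_simps)
  then show ?thesis
    using has_integral_rescale_unit_interval[OF has_integral_reflect_unit_interval[OF assms(1)]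
                                                 \<open>a < b\<close>]
    by simp
qed

lemma has_integral_square_mult_second_deriv:
  fixes f f' f'' :: "real \<Rightarrow> real"
  assumes "u \<le> v"
    and f': "\<And>x. x \<in> {u..v} \<Longrightarrow> (f has_real_derivative f' x) (at x within {u..v})"
    and f'': "\<And>x. x \<in> {u..v} \<Longrightarrow> (f' has_real_derivative f'' x) (at x within {u..v})"
  shows "((\<lambda>x. (x - p)\<^sup>2 / 2 * f'' x) has_integral
           (v - p)\<^sup>2 / 2 * f' v - (v - p) * f v - ((u - p)\<^sup>2 / 2 * f' u - (u - p) * f u)
           + integral {u..v} f) {u..v}"
proof -
  define F where "F x = (x - p)\<^sup>2 / 2 * f' x - (x - p) * f x + integral {u..x} f" for x
  have "continuous_on {u..v} f"
    using f' by (rule DERIV_continuous_on)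
  then have "((\<lambda>x. (x - p)\<^sup>2 / 2 * f'' x) has_integral F v - F u) {u..v}"
  proof (intro fundamental_theorem_of_calculus \<open>u \<le> v\<close>)
    fix x assume x: "x \<in> {u..v}"
    have sq: "((\<lambda>x. (x - p)\<^sup>2 / 2) has_real_derivative x - p) (at x within {u..v})"
      and lin: "((\<lambda>x. x - p) has_real_derivative 1) (at x within {u..v})"
      by (auto intro!: derivative_eq_intros)
    have "(F has_real_derivative
             ((x - p)\<^sup>2 / 2 * f'' x + (x - p) * f' x) - ((x - p) * f' x + 1 * f x) + f x)
           (at x within {u..v})"
      unfolding F_def
      by (intro DERIV_add DERIV_diff DERIV_mult' sq lin f' f'' x
                integral_has_real_derivative \<open>continuous_on {u..v} f\<close>)
    then show "(F has_vector_derivative (x - p)\<^sup>2 / 2 * f'' x) (at x within {u..v})"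
      by (simp add: has_real_derivative_iff_has_vector_derivative)
  qed
  then show ?thesis
    by (rule has_integral_eq_rhs) (simp add: F_def)
qed

definition midpoint_kernel :: "real \<Rightarrow> real \<Rightarrow> real \<Rightarrow> real" where
  "midpoint_kernel a b x = (b - a)\<^sup>2 / 2 * mkernel ((x - a) / (b - a))"

lemma midpoint_kernel_left:
  assumes "a < b" "x \<le> (a + b) / 2"
  shows "midpoint_kernel a b x = (x - a)\<^sup>2 / 2"
proof -
  have "(x - a) / (b - a) \<le> 1/2"
    using assms by (simp add: field_simps)
  then show ?thesis
    using assms by (simp add: midpoint_kernel_def mkernel_eq_left power_divide)
qed

lemma midpoint_kernel_right:
  assumes "a < b" "(a + b) / 2 \<le> x"
  shows "midpoint_kernel a b x = (x - b)\<^sup>2 / 2"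
proof -
  have "1/2 \<le> (x - a) / (b - a)" and "1 - (x - a) / (b - a) = (b - x) / (b - a)"
    using assms by (simp_all add: field_simps)
  then show ?thesis
    using assms by (simp add: midpoint_kernel_def mkernel_eq_right power_divide power2_commute)
qed

lemma has_integral_midpoint_kernel_mult_second_deriv:
  fixes f f' f'' :: "real \<Rightarrow> real"
  assumes "a < b"
    and f': "\<And>x. x \<in> {a..b} \<Longrightarrow> (f has_real_derivative f' x) (at x within {a..b})"
    and f'': "\<And>x. x \<in> {a..b} \<Longrightarrow> (f' has_real_derivative f'' x) (at x within {a..b})"
  shows "((\<lambda>x. midpoint_kernel a b x * f'' x) has_integral
           integral {a..b} f - (b - a) * f ((a + b) / 2)) {a..b}"
proof -
  define c where "c = (a + b) / 2"
  have c: "a \<le> c" "c \<le> b"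
    using \<open>a < b\<close> by (simp_all add: c_def)
  have "(f has_real_derivative f' x) (at x within {a..c})"
       "(f' has_real_derivative f'' x) (at x within {a..c})" if "x \<in> {a..c}" for x
    using that c by (auto intro!: DERIV_subset[OF f'] DERIV_subset[OF f''])
  then have "((\<lambda>x. (x - a)\<^sup>2 / 2 * f'' x) has_integral
                (c - a)\<^sup>2 / 2 * f' c - (c - a) * f c + integral {a..c} f) {a..c}"
    using has_integral_square_mult_second_deriv[of a c f f' f'' a] c by simp
  then have left: "((\<lambda>x. midpoint_kernel a b x * f'' x) has_integral
                     (c - a)\<^sup>2 / 2 * f' c - (c - a) * f c + integral {a..c} f) {a..c}"
    by (rule has_integral_eq[rotated]) (simp add: midpoint_kernel_left \<open>a < b\<close> c_def)
  have "(f has_real_derivative f' x) (at x within {c..b})"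
       "(f' has_real_derivative f'' x) (at x within {c..b})" if "x \<in> {c..b}" for x
    using that c by (auto intro!: DERIV_subset[OF f'] DERIV_subset[OF f''])
  then have "((\<lambda>x. (x - b)\<^sup>2 / 2 * f'' x) has_integral
                 - ((c - b)\<^sup>2 / 2 * f' c - (c - b) * f c) + integral {c..b} f) {c..b}"
    using has_integral_square_mult_second_deriv[of c b f f' f'' b] c by simp
  then have right: "((\<lambda>x. midpoint_kernel a b x * f'' x) has_integral
                      - ((c - b)\<^sup>2 / 2 * f' c - (c - b) * f c) + integral {c..b} f) {c..b}"
    by (rule has_integral_eq[rotated]) (simp add: midpoint_kernel_right \<open>a < b\<close> c_def)
  have "continuous_on {a..b} f"
    using f' by (rule DERIV_continuous_on)
  then have "integral {a..c} f + integral {c..b} f = integral {a..b} f"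
    using c by (intro Henstock_Kurzweil_Integration.integral_combine integrable_continuous_real)
  moreover have "(c - b)\<^sup>2 = (c - a)\<^sup>2" \<comment> \<open>so the two \<open>f'(c)\<close> boundary terms cancel\<close>
    by (simp add: c_def power2_eq_square field_simps)
  ultimately show ?thesis
    using has_integral_combine[OF c left right] unfolding c_def[symmetric]
    by (simp add: algebra_simps)
qed

lemma h_convex_le_interpolation:
  assumes "h_convex h {a..b} g" "x \<in> {a<..<b}"
  shows "g x \<le> h ((x - a) / (b - a)) * g b + h ((b - x) / (b - a)) * g a"
proof -
  define t where "t = (x - a) / (b - a)"
  have t: "t \<in> {0<..<1}" and "t * (b - a) = x - a"
    using assms(2) by (auto simp: t_def field_simps)
  then have x: "t * b + (1 - t) * a = x"
    by (simp add: algebra_simps)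
  have t_compl: "1 - (x - a) / (b - a) = (b - x) / (b - a)"
    using assms(2) by (simp add: field_simps)
  have "a \<in> {a..b}" "b \<in> {a..b}"
    using assms(2) by auto
  then have "g (t * b + (1 - t) * a) \<le> h t * g b + h (1 - t) * g a"
    using assms(1) t unfolding h_convex_def by blast
  then have "g x \<le> h t * g b + h (1 - t) * g a"
    by (simp only: x)
  then show ?thesis
    by (simp only: t_def t_compl)
qed

lemma midpoint_inequality_h_convex:
  fixes f f' f'' h :: "real \<Rightarrow> real"
  assumes "a < b"
    and f': "\<And>x. x \<in> {a..b} \<Longrightarrow> (f has_real_derivative f' x) (at x within {a..b})"
    and f'': "\<And>x. x \<in> {a..b} \<Longrightarrow> (f' has_real_derivative f'' x) (at x within {a..b})"
    and hconv: "h_convex h {a..b} (\<lambda>x. \<bar>f'' x\<bar>)"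
    and mh: "((\<lambda>t. mkernel t * h t) has_integral M) {0..1}"
  shows "\<bar>integral {a..b} f / (b - a) - f ((a + b) / 2)\<bar>
           \<le> (b - a)\<^sup>2 * ((\<bar>f'' a\<bar> + \<bar>f'' b\<bar>) / 2) * M"
proof -
  define K where "K = midpoint_kernel a b"
  define E where "E = integral {a..b} f - (b - a) * f ((a + b) / 2)"
  define g where "g x = (b - a)\<^sup>2 / 2 *
      (\<bar>f'' b\<bar> * (mkernel ((x - a) / (b - a)) * h ((x - a) / (b - a)))
       + \<bar>f'' a\<bar> * (mkernel ((b - x) / (b - a)) * h ((b - x) / (b - a))))" for x
  have Kf'': "((\<lambda>x. K x * f'' x) has_integral E) {a..b}"
    unfolding K_def E_def using \<open>a < b\<close> f' f''
    by (rule has_integral_midpoint_kernel_mult_second_deriv)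
  have g: "(g has_integral (b - a)\<^sup>2 / 2 * (\<bar>f'' b\<bar> * ((b - a) * M) + \<bar>f'' a\<bar> * ((b - a) * M))) {a..b}"
    unfolding g_def using mh \<open>a < b\<close>
    by (intro has_integral_mult_right has_integral_add has_integral_rescale_unit_interval
              has_integral_rescale_reflect_unit_interval)
  have "norm (K x * f'' x) \<le> g x" if x: "x \<in> {a..b}" for x
  proof (cases "x \<in> {a<..<b}")
    case True
    have "(b - x) / (b - a) = 1 - (x - a) / (b - a)"
      using \<open>a < b\<close> by (simp add: field_simps)
    then have "mkernel ((b - x) / (b - a)) = mkernel ((x - a) / (b - a))"
      by (simp only: mkernel_one_minus)
    then have "g x = K x * (h ((x - a) / (b - a)) * \<bar>f'' b\<bar> + h ((b - x) / (b - a)) * \<bar>f'' a\<bar>)"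
      by (simp add: g_def K_def midpoint_kernel_def algebra_simps)
    moreover have "K x \<ge> 0"
      by (simp add: K_def midpoint_kernel_def mkernel_nonneg)
    ultimately show ?thesis
      using h_convex_le_interpolation[OF hconv True]
      by (simp add: abs_mult mult_left_mono)
  next
    case False
    with x have "x = a \<or> x = b"
      by auto
    then show ?thesis
      using \<open>a < b\<close> by (auto simp: K_def g_def midpoint_kernel_def mkernel_def)
  qed
  then have "norm E \<le> (b - a)\<^sup>2 / 2 * (\<bar>f'' b\<bar> * ((b - a) * M) + \<bar>f'' a\<bar> * ((b - a) * M))"
    using integral_norm_bound_integral[OF has_integral_integrable[OF Kf''] has_integral_integrable[OF g]]
    by (simp only: integral_unique[OF Kf''] integral_unique[OF g])
  also have "\<dots> = (b - a) * ((b - a)\<^sup>2 * ((\<bar>f'' a\<bar> + \<bar>f'' b\<bar>) / 2) * M)"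
    by (simp add: algebra_simps)
  finally have E_bound: "\<bar>E\<bar> \<le> (b - a) * ((b - a)\<^sup>2 * ((\<bar>f'' a\<bar> + \<bar>f'' b\<bar>) / 2) * M)"
    by simp
  have "\<bar>integral {a..b} f / (b - a) - f ((a + b) / 2)\<bar> = \<bar>E / (b - a)\<bar>"
    using \<open>a < b\<close> by (simp add: E_def diff_divide_distrib)
  also have "\<dots> = \<bar>E\<bar> / (b - a)"
    using \<open>a < b\<close> by simp
  also have "\<dots> \<le> (b - a)\<^sup>2 * ((\<bar>f'' a\<bar> + \<bar>f'' b\<bar>) / 2) * M"
    using E_bound \<open>a < b\<close> by (simp add: pos_divide_le_eq mult.commute)
  finally show ?thesis .
qed

theorem theorem10:
  fixes J I :: "real set" and h f f' f'' :: "real \<Rightarrow> real" and a b :: real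
  assumes J: "is_interval J" "{0<..<1} \<subseteq> J"
    and h_nonneg: "\<forall>x\<in>J. 0 \<le> h x"
    and h_nonzero: "\<exists>x\<in>J. h x \<noteq> 0"
    and h_int: "set_integrable lborel {0<..<1} h"
    and I: "is_interval I" "I \<subseteq> {0..}"
    and ab: "a \<in> interior I" "b \<in> interior I" "a < b"
    and f': "\<forall>x\<in>interior I. (f has_real_derivative f' x) (at x)"
    and f'': "\<forall>x\<in>interior I. (f' has_real_derivative f'' x) (at x)"
    and f''_int: "set_integrable lborel {a..b} f''"
    and hconv: "h_convex h {a..b} (\<lambda>x. \<bar>f'' x\<bar>)"
  shows "\<bar>(1 / (b - a)) * (LBINT x:{a..b}. f x) - f ((a + b) / 2)\<bar>
    \<le> (b - a)^2 * ((\<bar>f'' a\<bar> + \<bar>f'' b\<bar>) / 2) * (LBINT t:{0<..<1}. mkernel t * h t)"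
proof -
  have "is_interval (interior I)"
    using I(1) by (simp add: is_interval_convex_1)
  then have ab_sub: "{a..b} \<subseteq> interior I"
    using mem_is_interval_1_I[OF _ ab(1,2)] by auto
  have df': "(f has_real_derivative f' x) (at x within {a..b})"
    and df'': "(f' has_real_derivative f'' x) (at x within {a..b})" if "x \<in> {a..b}" for x
  proof -
    have "x \<in> interior I"
      using ab_sub that by auto
    then show "(f has_real_derivative f' x) (at x within {a..b})"
      and "(f' has_real_derivative f'' x) (at x within {a..b})"
      using f' f'' has_field_derivative_at_within by blast+
  qed
  have mh_int: "set_integrable lborel {0<..<1} (\<lambda>t. mkernel t * h t)"
    using h_int by (rule set_integrable_mkernel_mult)
  have mh: "((\<lambda>t. mkernel t * h t) has_integral (LBINT t:{0<..<1}. mkernel t * h t)) {0..1}"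
    unfolding has_integral_Icc_iff_Ioo set_borel_integral_eq_integral(2)[OF mh_int]
    using set_borel_integral_eq_integral(1)[OF mh_int] by (rule integrable_integral)
  have "continuous_on {a..b} f"
    using df' by (rule DERIV_continuous_on)
  then have "set_integrable lborel {a..b} f"
    unfolding set_integrable_def by (intro borel_integrable_compact compact_Icc)
  then have "(LBINT x:{a..b}. f x) = integral {a..b} f"
    by (rule set_borel_integral_eq_integral(2))
  then show ?thesis
    using midpoint_inequality_h_convex[OF ab(3) df' df'' hconv mh] by simp
qed

end
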